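(* Let $A\in\mathbb{R}^{n\times n}$, $B\in\mathbb{R}^{n\times b}$, $C\in\mathbb{R}^{c\times n}$ with $(A,B)$ stabilizable and $(A,C)$ detectable. Let $X_\infty\in\mathbb{R}^{n\times n}$ be the unique symmetric positive semidefinite solution of the algebraic Riccati equation $0=A^TX+XA-XBB^TX+C^TC$, and let $q_1,\dots,q_n\in\mathbb{R}^n$ be an orthonormal system of eigenvectors of $X_\infty$ with corresponding eigenvalues $\lambda_1(X_\infty)\ge\dots\ge\lambda_n(X_\infty)$ (i.e. $X_\infty q_i=\lambda_i(X_\infty)q_i$). Let $X\colon[0,\infty)\to\mathbb{R}^{n\times n}$ be the unique solution of the differential Riccati equation $$\dot X(t)=A^TX(t)+X(t)A-X(t)BB^TX(t)+C^TC,\qquad X(0)=0.$$ Then for all $i,j=1,\dots,n$ and all $t\ge0$, $$|q_i^TX(t)q_j|\le\sqrt{\lambda_i(X_\infty)\,\lambda_j(X_\infty)}.$$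
   Context: $\lambda_k(\cdot)$ denotes the $k$-th largest eigenvalue of a real symmetric matrix. The differential Riccati equation with zero initial value has a unique solution on $[0,\infty)$. *)

theory Defs
  imports "HOL-Analysis.Analysis"
begin

definition cmat :: "real^'n^'m \<Rightarrow> complex^'n^'m" where
  "cmat M = (\<chi> i j. complex_of_real (M $ i $ j))"

definition hurwitz :: "real^'n^'n \<Rightarrow> bool" where
  "hurwitz M \<longleftrightarrow> (\<forall>(\<mu>::complex) (v::complex^'n). v \<noteq> 0 \<and> cmat M *v v = \<mu> *s v \<longrightarrow> Re \<mu> < 0)"

definition stabilizable :: "real^'n^'n \<Rightarrow> real^'b^'n \<Rightarrow> bool" where
  "stabilizable A B \<longleftrightarrow> (\<exists>K::real^'n^'b. hurwitz (A - B ** K))"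

definition detectable :: "real^'n^'n \<Rightarrow> real^'n^'c \<Rightarrow> bool" where
  "detectable A C \<longleftrightarrow> (\<exists>L::real^'c^'n. hurwitz (A - L ** C))"

definition psd :: "real^'n^'n \<Rightarrow> bool" where
  "psd M \<longleftrightarrow> (\<forall>v. 0 \<le> v \<bullet> (M *v v))"

definition riccati_rhs :: "real^'n^'n \<Rightarrow> real^'b^'n \<Rightarrow> real^'n^'c \<Rightarrow> real^'n^'n \<Rightarrow> real^'n^'n" where
  "riccati_rhs A B C X = transpose A ** X + X ** A - X ** B ** transpose B ** X + transpose C ** C"

end

theory Submission
  imports Defs
begin

(* X(t) and X_inf - X(t) are positive semidefinite for every t >= 0. Hence the Cauchy-Schwarz
   inequality for the semi-inner product (u, w) |-> u^T X(t) w bounds |q_i^T X(t) q_j| by the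
   square root of q_i^T X(t) q_i * q_j^T X(t) q_j, and q_k^T X(t) q_k <= q_k^T X_inf q_k = lambda_k.

   Both semidefiniteness claims are instances of one comparison principle: a symmetric M with
   M(0) >= 0 and M' >= G^T M + M G (as quadratic forms, G continuous) stays semidefinite. The
   Riccati right-hand sides of two symmetric matrices P, Q differ by G^T (P - Q) + (P - Q) G with
   G = A - B B^T (P + Q) / 2; take (P, Q) = (X, 0) and (X_inf, X). The principle itself follows by
   looking at the first time at which v^T M(t) v + eps e^((2K + 1) t) vanishes on the unit sphere.
   Symmetry of X(t) comes from Gronwall's inequality for X - X^T. *)

section \<open>Matrix algebra\<close>

lemma transpose_zero [simp]: "transpose 0 = (0 :: 'a::zero^'n^'m)"
  by (simp add: transpose_def vec_eq_iff)

lemma transpose_add: "transpose (A + B) = transpose A + transpose (B :: 'a::semiring_1^'n^'m)"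
  by (simp add: transpose_def vec_eq_iff)

lemma transpose_diff: "transpose (A - B) = transpose A - transpose (B :: 'a::ring_1^'n^'m)"
  by (simp add: transpose_def vec_eq_iff)

lemma matrix_add_rdistrib: "(A + B) ** C = A ** C + B ** (C :: 'a::semiring_1^'n^'m)"
  by (simp add: matrix_matrix_mult_def vec_eq_iff distrib_right sum.distrib)

lemma matrix_diff_rdistrib: "(A - B) ** C = A ** C - B ** (C :: 'a::ring_1^'n^'m)"
  by (simp add: matrix_matrix_mult_def vec_eq_iff left_diff_distrib sum_subtractf)

lemma matrix_diff_ldistrib: "C ** (A - B) = C ** A - C ** (B :: 'a::ring_1^'n^'m)"
  by (simp add: matrix_matrix_mult_def vec_eq_iff right_diff_distrib sum_subtractf)

lemma inner_matrix_vector_mult_transpose: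
  fixes A :: "real^'n^'m"
  shows "(A *v x) \<bullet> y = x \<bullet> (transpose A *v y)"
  by (metis dot_lmul_matrix inner_commute transpose_matrix_vector)

lemma symmetric_quadform_commute:
  fixes P :: "real^'n^'n"
  assumes "transpose P = P"
  shows "v \<bullet> (P *v w) = w \<bullet> (P *v v)"
  by (metis assms dot_lmul_matrix inner_commute transpose_matrix_vector)

lemma bounded_bilinear_matrix_matrix_mult:
  "bounded_bilinear ((**) :: real^'k^'m \<Rightarrow> real^'n^'k \<Rightarrow> real^'n^'m)"
  unfolding bilinear_conv_bounded_bilinear[symmetric] bilinear_def
  by (auto intro!: linearI simp: matrix_add_ldistrib matrix_add_rdistrib matrix_scalar_ac scalar_matrix_assoc)

lemma bounded_bilinear_matrix_vector_mult:
  "bounded_bilinear ((*v) :: real^'n^'m \<Rightarrow> real^'n \<Rightarrow> real^'m)"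
  unfolding bilinear_conv_bounded_bilinear[symmetric] bilinear_def
  by (auto intro!: linearI simp: matrix_vector_right_distrib matrix_vector_mult_add_rdistrib
      matrix_scaleR_vector_ac scaleR_matrix_vector_assoc)

lemma bounded_linear_transpose: "bounded_linear (transpose :: real^'n^'m \<Rightarrow> real^'m^'n)"
  by (auto intro!: linearI simp: linear_conv_bounded_linear[symmetric] transpose_add transpose_scalar)

lemmas continuous_on_matrix_mult [continuous_intros] =
  bounded_bilinear.continuous_on[OF bounded_bilinear_matrix_matrix_mult]

lemmas continuous_on_matrix_vector_mult [continuous_intros] =
  bounded_bilinear.continuous_on[OF bounded_bilinear_matrix_vector_mult]

lemmas continuous_on_transpose [continuous_intros] =
  bounded_linear.continuous_on[OF bounded_linear_transpose]

lemma bounded_linear_quadform: "bounded_linear (\<lambda>P::real^'n^'n. v \<bullet> (P *v v))"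
  using bounded_linear_compose[OF bounded_linear_inner_right
      bounded_bilinear.bounded_linear_left[OF bounded_bilinear_matrix_vector_mult]] .

section \<open>Positive semidefinite matrices\<close>

lemma psd_cauchy_schwarz:
  fixes P :: "real^'n^'n"
  assumes sym: "transpose P = P" and pos: "psd P"
  shows "(u \<bullet> (P *v w))\<^sup>2 \<le> (u \<bullet> (P *v u)) * (w \<bullet> (P *v w))"
proof -
  define a b c where "a = u \<bullet> (P *v u)" and "b = u \<bullet> (P *v w)" and "c = w \<bullet> (P *v w)"
  have quadratic: "0 \<le> a + 2 * s * b + s\<^sup>2 * c" for s
  proof -
    have "w \<bullet> (P *v u) = b"
      using symmetric_quadform_commute[OF sym] by (simp add: b_def)
    then have "(u + s *\<^sub>R w) \<bullet> (P *v (u + s *\<^sub>R w)) = a + 2 * s * b + s\<^sup>2 * c"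
      by (simp add: matrix_vector_right_distrib matrix_vector_mult_scaleR inner_add_left
          inner_add_right a_def b_def c_def power2_eq_square algebra_simps)
    then show ?thesis
      using pos by (metis psd_def)
  qed
  show ?thesis
  proof (cases "c = 0")
    case True
    have "b = 0"
    proof (rule ccontr)
      assume "b \<noteq> 0"
      have "0 \<le> a + 2 * (- (a + 1) / (2 * b)) * b"
        using quadratic[of "- (a + 1) / (2 * b)"] True by simp
      also have "\<dots> = -1"
        using \<open>b \<noteq> 0\<close> by (simp add: field_simps)
      finally show False by simp
    qed
    with True show ?thesis
      by (simp add: a_def b_def c_def)
  next
    case False
    moreover have "c \<ge> 0"
      using pos by (simp add: psd_def c_def)
    ultimately have "c > 0"
      by simp
    have "0 \<le> a + 2 * (- b / c) * b + (- b / c)\<^sup>2 * c"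
      by (rule quadratic)
    also have "\<dots> = a - b\<^sup>2 / c"
      using \<open>c > 0\<close> by (simp add: field_simps power2_eq_square)
    finally show ?thesis
      using \<open>c > 0\<close> by (simp add: a_def b_def c_def divide_le_eq mult.commute)
  qed
qed

lemma psd_quadform_eq_0_imp_kernel:
  fixes P :: "real^'n^'n"
  assumes "transpose P = P" "psd P" "v \<bullet> (P *v v) = 0"
  shows "P *v v = 0"
proof -
  have "((P *v v) \<bullet> (P *v v))\<^sup>2 \<le> ((P *v v) \<bullet> (P *v (P *v v))) * (v \<bullet> (P *v v))"
    using psd_cauchy_schwarz[OF assms(1,2)] .
  then show ?thesis
    using assms(3) by simp
qed

lemma psd_if_unit_vectors:
  fixes P :: "real^'n^'n"
  assumes "\<And>w. norm w = 1 \<Longrightarrow> 0 \<le> w \<bullet> (P *v w)"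
  shows "psd P"
  unfolding psd_def
proof
  fix w :: "real^'n"
  show "0 \<le> w \<bullet> (P *v w)"
  proof (cases "w = 0")
    case False
    have "0 \<le> (w /\<^sub>R norm w) \<bullet> (P *v (w /\<^sub>R norm w))"
      using False by (intro assms) simp
    also have "\<dots> = (w \<bullet> (P *v w)) / (norm w)\<^sup>2"
      by (simp add: matrix_vector_mult_scaleR power2_eq_square divide_inverse)
    finally show ?thesis
      using False by (simp add: zero_le_divide_iff)
  qed simp
qed

lemma symmetric_quadform_min_eigenvector:
  fixes M :: "real^'n^'n"
  assumes sym: "transpose M = M" and min: "\<And>u. norm u = 1 \<Longrightarrow> m \<le> u \<bullet> (M *v u)"
    and v: "norm v = 1" "v \<bullet> (M *v v) = m"
  shows "M *v v = m *\<^sub>R v"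
proof -
  define P where "P = M - m *\<^sub>R mat 1"
  have P_quadform: "u \<bullet> (P *v u) = u \<bullet> (M *v u) - m" if "norm u = 1" for u
    using that by (simp add: P_def matrix_vector_mult_diff_rdistrib inner_diff_right
        matrix_scaleR_vector_ac[symmetric] dot_square_norm)
  have "transpose P = P"
    using sym by (simp add: P_def transpose_diff transpose_scalar)
  moreover have "psd P"
    using min P_quadform by (intro psd_if_unit_vectors) simp
  ultimately have "P *v v = 0"
    using P_quadform v by (intro psd_quadform_eq_0_imp_kernel) auto
  then show ?thesis
    by (simp add: P_def matrix_vector_mult_diff_rdistrib matrix_scaleR_vector_ac[symmetric])
qed

lemma psd_sandwich_inner_bound:
  fixes P Q :: "real^'n^'n"
  assumes sym: "transpose P = P" and psd: "psd P" "psd (Q - P)"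
    and u: "Q *v u = a *\<^sub>R u" "u \<bullet> u = 1" and w: "Q *v w = b *\<^sub>R w" "w \<bullet> w = 1"
  shows "\<bar>u \<bullet> (P *v w)\<bar> \<le> sqrt (a * b)"
proof -
  have diag: "0 \<le> x \<bullet> (P *v x) \<and> x \<bullet> (P *v x) \<le> c" if "Q *v x = c *\<^sub>R x" "x \<bullet> x = 1" for x c
    using psd that unfolding psd_def
    by (metis (no_types, lifting) diff_ge_0_iff_ge inner_diff_right inner_scaleR_right
        matrix_vector_mult_diff_rdistrib mult.right_neutral)
  have "(u \<bullet> (P *v w))\<^sup>2 \<le> (u \<bullet> (P *v u)) * (w \<bullet> (P *v w))"
    by (rule psd_cauchy_schwarz[OF sym psd(1)])
  also have "\<dots> \<le> a * b"
    using diag[OF u] diag[OF w] by (intro mult_mono) auto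
  finally show ?thesis
    using real_sqrt_le_mono by fastforce
qed

section \<open>Matrix differential inequalities\<close>

lemma first_nonpositive_time:
  fixes \<phi> :: "real \<Rightarrow> 'a::metric_space \<Rightarrow> real"
  assumes cont: "continuous_on ({0..T} \<times> S) (\<lambda>z. \<phi> (fst z) (snd z))"
    and S: "compact S"
    and init: "\<And>u. u \<in> S \<Longrightarrow> 0 < \<phi> 0 u"
    and fail: "t \<in> {0..T}" "w \<in> S" "\<phi> t w \<le> 0"
  obtains \<tau> v where "0 < \<tau>" "\<tau> \<le> T" "v \<in> S" "\<phi> \<tau> v = 0" "\<And>u. u \<in> S \<Longrightarrow> 0 \<le> \<phi> \<tau> u"
    "\<And>s u. 0 \<le> s \<Longrightarrow> s < \<tau> \<Longrightarrow> u \<in> S \<Longrightarrow> 0 < \<phi> s u"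
proof -
  define Z where "Z = {z \<in> {0..T} \<times> S. \<phi> (fst z) (snd z) \<le> 0}"
  have "closed Z"
    unfolding Z_def using S
    by (intro continuous_on_closed_Collect_le cont continuous_on_const closed_Times compact_imp_closed)
      auto
  then have "compact (({0..T} \<times> S) \<inter> Z)"
    using S by (intro compact_Int_closed compact_Times) auto
  also have "({0..T} \<times> S) \<inter> Z = Z"
    by (auto simp: Z_def)
  finally have "compact (fst ` Z)"
    by (intro compact_continuous_image continuous_on_fst continuous_on_id)
  moreover have "(t, w) \<in> Z"
    using fail by (simp add: Z_def)
  ultimately obtain \<tau> where "\<tau> \<in> fst ` Z" and \<tau>_least: "\<And>s. s \<in> fst ` Z \<Longrightarrow> \<tau> \<le> s"
    using compact_attains_inf[of "fst ` Z"] by blast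
  then obtain v where "(\<tau>, v) \<in> Z"
    by force
  then have \<tau>: "0 \<le> \<tau>" "\<tau> \<le> T" and v: "v \<in> S" "\<phi> \<tau> v \<le> 0"
    by (simp_all add: Z_def)
  have before: "0 < \<phi> s u" if "0 \<le> s" "s < \<tau>" "u \<in> S" for s u
    using \<tau>_least[of s] that \<tau> by (force simp: Z_def)
  have "\<tau> \<noteq> 0"
    using init[OF v(1)] v(2) by auto
  with \<tau> have "0 < \<tau>" by simp
  have at_\<tau>: "0 \<le> \<phi> \<tau> u" if u: "u \<in> S" for u
  proof -
    have "continuous_on {0..\<tau>} (\<lambda>s. \<phi> s u)"
    proof (rule continuous_on_compose2[OF cont, of _ "\<lambda>s. (s, u)", simplified])
      show "continuous_on {0..\<tau>} (\<lambda>s. (s, u))"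
        by (intro continuous_intros)
      show "(\<lambda>s. (s, u)) ` {0..\<tau>} \<subseteq> {0..T} \<times> S"
        using \<tau> u by auto
    qed
    then have "((\<lambda>s. \<phi> s u) \<longlongrightarrow> \<phi> \<tau> u) (at_left \<tau>)"
      using \<open>0 < \<tau>\<close> by (rule continuous_on_Icc_at_leftD)
    moreover have "eventually (\<lambda>s. 0 \<le> \<phi> s u) (at_left \<tau>)"
      using eventually_at_left_real[OF \<open>0 < \<tau>\<close>]
      by eventually_elim (simp add: before u less_imp_le)
    ultimately show ?thesis
      by (rule tendsto_lowerbound) simp
  qed
  show thesis
  proof (rule that)
    show "\<phi> \<tau> v = 0"
      using v at_\<tau>[OF v(1)] by simp
  qed (use \<open>0 < \<tau>\<close> \<tau> v at_\<tau> before in auto)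
qed

lemma first_zero_derivative_nonpos:
  fixes f :: "real \<Rightarrow> real"
  assumes der: "(f has_real_derivative d) (at \<tau> within {0..})"
    and "0 < \<tau>" "f \<tau> = 0" and before: "\<And>s. 0 \<le> s \<Longrightarrow> s < \<tau> \<Longrightarrow> 0 < f s"
  shows "d \<le> 0"
proof (rule ccontr)
  assume "\<not> d \<le> 0"
  then obtain \<delta> where "\<delta> > 0"
    and \<delta>: "\<And>h. 0 < h \<Longrightarrow> \<tau> - h \<in> {0..} \<Longrightarrow> h < \<delta> \<Longrightarrow> f (\<tau> - h) < f \<tau>"
    using has_real_derivative_pos_inc_left[OF der] by auto
  define h where "h = min (\<delta> / 2) \<tau>"
  have "f (\<tau> - h) < 0"
    using \<delta>[of h] \<open>\<delta> > 0\<close> assms(2,3) by (simp add: h_def)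
  moreover have "0 < f (\<tau> - h)"
    using before[of "\<tau> - h"] \<open>\<delta> > 0\<close> assms(2) by (simp add: h_def)
  ultimately show False
    by simp
qed

lemma psd_preserved_perturbed:
  fixes M M' G :: "real \<Rightarrow> real^'n^'n"
  assumes der: "\<And>t. t \<ge> 0 \<Longrightarrow> (M has_vector_derivative M' t) (at t within {0..})"
    and sym: "\<And>t. t \<ge> 0 \<Longrightarrow> transpose (M t) = M t"
    and ineq: "\<And>t v. t \<ge> 0 \<Longrightarrow> 2 * ((G t *v v) \<bullet> (M t *v v)) \<le> v \<bullet> (M' t *v v)"
    and bound: "\<And>t v. t \<in> {0..T} \<Longrightarrow> norm v = 1 \<Longrightarrow> \<bar>(G t *v v) \<bullet> v\<bar> \<le> K"
    and init: "psd (M 0)"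
    and \<epsilon>: "\<epsilon> > 0" and t: "t \<in> {0..T}" and w: "norm w = 1"
  shows "0 < w \<bullet> (M t *v w) + \<epsilon> * exp ((2 * K + 1) * t)"
proof (rule ccontr)
  define a where "a = 2 * K + 1"
  define \<phi> where "\<phi> s u = u \<bullet> (M s *v u) + \<epsilon> * exp (a * s)" for s u
  assume "\<not> ?thesis"
  then have "\<phi> t w \<le> 0"
    by (simp add: \<phi>_def a_def)
  have contM: "continuous_on {0..} M"
    using der by (intro continuous_on_vector_derivative) auto
  have "continuous_on ({0..T} \<times> sphere 0 1) (\<lambda>z. \<phi> (fst z) (snd z))"
    unfolding \<phi>_def
    by (intro continuous_intros continuous_on_compose2[OF contM]) auto
  moreover have "0 < \<phi> 0 u" for u
    using init \<epsilon> by (simp add: \<phi>_def psd_def add_nonneg_pos)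
  ultimately obtain \<tau> v where \<tau>: "0 < \<tau>" "\<tau> \<le> T" and v: "norm v = 1" "\<phi> \<tau> v = 0"
    and at_\<tau>: "\<And>u. norm u = 1 \<Longrightarrow> 0 \<le> \<phi> \<tau> u"
    and before: "\<And>s u. 0 \<le> s \<Longrightarrow> s < \<tau> \<Longrightarrow> norm u = 1 \<Longrightarrow> 0 < \<phi> s u"
    using first_nonpositive_time[of T "sphere 0 1" \<phi> t w] t w \<open>\<phi> t w \<le> 0\<close> by auto
  define E where "E = \<epsilon> * exp (a * \<tau>)"
  have "E > 0"
    using \<epsilon> by (simp add: E_def)
  have Mv: "M \<tau> *v v = - E *\<^sub>R v"
  proof (rule symmetric_quadform_min_eigenvector)
    show "transpose (M \<tau>) = M \<tau>"
      using sym \<tau> by simp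
    show "- E \<le> u \<bullet> (M \<tau> *v u)" if "norm u = 1" for u
      using at_\<tau>[OF that] by (simp add: \<phi>_def E_def)
  qed (use v in \<open>simp_all add: \<phi>_def E_def\<close>)
  define d where "d = v \<bullet> (M' \<tau> *v v) + \<epsilon> * (a * exp (a * \<tau>))"
  \<comment> \<open>By Mv the hypothesis on M' only costs 2 E K, which the growth rate a = 2 K + 1 outweighs.\<close>
  have "d > 0"
  proof -
    have "(G \<tau> *v v) \<bullet> v \<le> K"
      using bound[of \<tau> v] \<tau> v by simp
    then have "E * ((G \<tau> *v v) \<bullet> v) \<le> E * K"
      using \<open>E > 0\<close> by simp
    moreover have "2 * ((G \<tau> *v v) \<bullet> (M \<tau> *v v)) = - 2 * (E * ((G \<tau> *v v) \<bullet> v))"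
      by (simp add: Mv)
    moreover have "d = v \<bullet> (M' \<tau> *v v) + 2 * E * K + E"
      by (simp add: d_def E_def a_def algebra_simps)
    ultimately show ?thesis
      using ineq[of \<tau> v] \<tau> \<open>E > 0\<close> by linarith
  qed
  moreover have "((\<lambda>s. \<phi> s v) has_real_derivative d) (at \<tau> within {0..})"
  proof -
    have "((\<lambda>s. v \<bullet> (M s *v v)) has_real_derivative v \<bullet> (M' \<tau> *v v)) (at \<tau> within {0..})"
      using bounded_linear.has_vector_derivative[OF bounded_linear_quadform der] \<tau>
      by (simp add: has_real_derivative_iff_has_vector_derivative)
    then show ?thesis
      unfolding \<phi>_def d_def by (auto intro!: derivative_eq_intros)
  qed
  then have "d \<le> 0"
    by (rule first_zero_derivative_nonpos) (use \<tau> v before in auto)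
  ultimately show False
    by simp
qed

lemma psd_preserved:
  fixes M M' G :: "real \<Rightarrow> real^'n^'n"
  assumes der: "\<And>t. t \<ge> 0 \<Longrightarrow> (M has_vector_derivative M' t) (at t within {0..})"
    and sym: "\<And>t. t \<ge> 0 \<Longrightarrow> transpose (M t) = M t"
    and ineq: "\<And>t v. t \<ge> 0 \<Longrightarrow> 2 * ((G t *v v) \<bullet> (M t *v v)) \<le> v \<bullet> (M' t *v v)"
    and contG: "continuous_on {0..} G"
    and init: "psd (M 0)"
    and T: "T \<ge> 0"
  shows "psd (M T)"
proof (rule psd_if_unit_vectors)
  have "continuous_on ({0..T} \<times> sphere 0 1) (\<lambda>z. \<bar>(G (fst z) *v snd z) \<bullet> snd z\<bar>)"
    by (intro continuous_intros continuous_on_compose2[OF contG]) auto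
  then have "bounded ((\<lambda>z. \<bar>(G (fst z) *v snd z) \<bullet> snd z\<bar>) ` ({0..T} \<times> sphere 0 1))"
    by (intro compact_imp_bounded compact_continuous_image compact_Times) auto
  then obtain K where "\<And>t v. t \<in> {0..T} \<Longrightarrow> norm v = 1 \<Longrightarrow> \<bar>(G t *v v) \<bullet> v\<bar> \<le> K"
    unfolding bounded_iff by fastforce
  note perturbed = psd_preserved_perturbed[OF der sym ineq this init]
  fix w :: "real^'n"
  assume w: "norm w = 1"
  show "0 \<le> w \<bullet> (M T *v w)"
  proof (rule field_le_epsilon)
    fix e :: real
    assume "e > 0"
    then have "0 < w \<bullet> (M T *v w) + e / exp ((2 * K + 1) * T) * exp ((2 * K + 1) * T)"
      using T w by (intro perturbed) auto
    then show "0 \<le> w \<bullet> (M T *v w) + e"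
      by simp
  qed
qed

lemma gronwall_zero:
  fixes Y Y' :: "real \<Rightarrow> 'a::real_inner"
  assumes der: "\<And>t. t \<ge> 0 \<Longrightarrow> (Y has_vector_derivative Y' t) (at t within {0..})"
    and bound: "\<And>t. t \<in> {0..T} \<Longrightarrow> norm (Y' t) \<le> L * norm (Y t)"
    and Y0: "Y 0 = 0" and t: "t \<in> {0..T}"
  shows "Y t = 0"
proof -
  define f where "f = (\<lambda>s. exp (- 2 * L * s) * (Y s \<bullet> Y s))"
  have contY: "continuous_on {0..} Y"
    using der by (intro continuous_on_vector_derivative) auto
  have "f t \<le> f 0"
  proof (rule DERIV_nonpos_imp_decreasing_open[of 0 t f])
    show "continuous_on {0..t} f"
      unfolding f_def using t by (intro continuous_intros continuous_on_subset[OF contY]) auto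
    fix x
    assume x: "0 < x" "x < t"
    have "(Y has_vector_derivative Y' x) (at x)"
      using der[of x] x at_within_interior[of x "{0..}"] by simp
    then have "((\<lambda>s. Y s \<bullet> Y s) has_real_derivative 2 * (Y x \<bullet> Y' x)) (at x)"
      using bounded_bilinear.has_vector_derivative[OF bounded_bilinear_inner]
      by (fastforce simp: has_real_derivative_iff_has_vector_derivative inner_commute)
    then have "(f has_real_derivative
        exp (- 2 * L * x) * (2 * (Y x \<bullet> Y' x) - 2 * L * (Y x \<bullet> Y x))) (at x)"
      unfolding f_def by (auto intro!: derivative_eq_intros simp: algebra_simps)
    moreover have "Y x \<bullet> Y' x \<le> L * (Y x \<bullet> Y x)"
    proof -
      have "Y x \<bullet> Y' x \<le> norm (Y x) * norm (Y' x)"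
        by (rule norm_cauchy_schwarz)
      also have "\<dots> \<le> norm (Y x) * (L * norm (Y x))"
        using bound[of x] x t by (intro mult_left_mono) auto
      finally show ?thesis
        by (simp add: dot_square_norm power2_eq_square algebra_simps)
    qed
    ultimately show "\<exists>y. (f has_real_derivative y) (at x) \<and> y \<le> 0"
      by (intro exI conjI) (auto simp: mult_nonneg_nonpos)
  qed (use t in simp)
  then have "Y t \<bullet> Y t \<le> 0"
    using Y0 by (simp add: f_def mult_le_0_iff)
  then show ?thesis
    by (metis antisym inner_eq_zero_iff inner_ge_zero)
qed

lemma lyapunov_ode_zero:
  fixes Y H :: "real \<Rightarrow> real^'n^'n"
  assumes der: "\<And>t. t \<ge> 0 \<Longrightarrow>
      (Y has_vector_derivative transpose (H t) ** Y t + Y t ** H t) (at t within {0..})"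
    and contH: "continuous_on {0..} H" and Y0: "Y 0 = 0" and T: "T \<ge> 0"
  shows "Y T = 0"
proof -
  have "continuous_on {0..T} (\<lambda>t. norm (transpose (H t)) + norm (H t))"
    using continuous_on_subset[OF contH] by (intro continuous_intros) auto
  then have "bounded ((\<lambda>t. norm (transpose (H t)) + norm (H t)) ` {0..T})"
    by (intro compact_imp_bounded compact_continuous_image) auto
  then obtain K where K: "\<And>t. t \<in> {0..T} \<Longrightarrow> norm (transpose (H t)) + norm (H t) \<le> K"
    unfolding bounded_iff by fastforce
  obtain c where "c > 0"
    and c: "\<And>(P :: real^'n^'n) (Q :: real^'n^'n). norm (P ** Q) \<le> norm P * norm Q * c"
    using bounded_bilinear.pos_bounded[OF bounded_bilinear_matrix_matrix_mult] by blast
  show ?thesis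
  proof (rule gronwall_zero[OF der _ Y0])
    show "norm (transpose (H t) ** Y t + Y t ** H t) \<le> (K * c) * norm (Y t)"
      if "t \<in> {0..T}" for t
    proof -
      have "norm (transpose (H t) ** Y t + Y t ** H t)
          \<le> norm (transpose (H t)) * norm (Y t) * c + norm (Y t) * norm (H t) * c"
        using norm_triangle_ineq add_mono[OF c c] by (rule order_trans)
      also have "\<dots> = (norm (transpose (H t)) + norm (H t)) * (c * norm (Y t))"
        by (simp add: algebra_simps)
      also have "\<dots> \<le> K * (c * norm (Y t))"
        using K[OF that] \<open>c > 0\<close> by (intro mult_right_mono) auto
      finally show ?thesis
        by (simp add: mult.assoc)
    qed
  qed (use T in auto)
qed

section \<open>The Riccati equation\<close>

lemma riccati_rhs_minus_transpose:
  "riccati_rhs A B C X - transpose (riccati_rhs A B C X) =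
    transpose (A - (B ** transpose B) ** X) ** (X - transpose X)
      + (X - transpose X) ** (A - (B ** transpose B) ** X)"
  by (simp add: riccati_rhs_def transpose_add transpose_diff matrix_transpose_mul
      matrix_add_rdistrib matrix_diff_rdistrib matrix_diff_ldistrib matrix_add_ldistrib
      matrix_mul_assoc algebra_simps)

lemma riccati_solution_symmetric:
  fixes A :: "real^'n^'n" and B :: "real^'b^'n" and C :: "real^'n^'c" and X :: "real \<Rightarrow> real^'n^'n"
  assumes X0: "X 0 = 0"
    and der: "\<And>t. t \<ge> 0 \<Longrightarrow> (X has_vector_derivative riccati_rhs A B C (X t)) (at t within {0..})"
    and T: "T \<ge> 0"
  shows "transpose (X T) = X T"
proof -
  define H where "H t = A - (B ** transpose B) ** X t" for t
  have "X T - transpose (X T) = 0"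
  proof (rule lyapunov_ode_zero[where H = H, OF _ _ _ T])
    show "((\<lambda>t. X t - transpose (X t)) has_vector_derivative
        transpose (H t) ** (X t - transpose (X t)) + (X t - transpose (X t)) ** H t) (at t within {0..})"
      if "t \<ge> 0" for t
      unfolding H_def riccati_rhs_minus_transpose[of A B C, symmetric]
      using der[OF that] bounded_linear.has_vector_derivative[OF bounded_linear_transpose der[OF that]]
      by (rule has_vector_derivative_diff)
    have "continuous_on {0..} X"
      using der by (intro continuous_on_vector_derivative) auto
    then show "continuous_on {0..} H"
      unfolding H_def by (intro continuous_intros)
  qed (simp add: X0)
  then show ?thesis
    by simp
qed

lemma riccati_rhs_quadform:
  assumes "transpose P = P"
  shows "v \<bullet> (riccati_rhs A B C P *v v) =
    2 * ((A *v v) \<bullet> (P *v v)) - (norm (transpose B *v (P *v v)))\<^sup>2 + (norm (C *v v))\<^sup>2"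
proof -
  define p where "p = transpose B *v (P *v v)"
  have "v \<bullet> ((transpose A ** P) *v v) = (A *v v) \<bullet> (P *v v)"
    by (simp only: matrix_vector_mul_assoc[symmetric] inner_matrix_vector_mult_transpose)
  moreover have "v \<bullet> ((P ** A) *v v) = (A *v v) \<bullet> (P *v v)"
    by (simp only: matrix_vector_mul_assoc[symmetric] symmetric_quadform_commute[OF assms])
  moreover have "v \<bullet> ((P ** B ** transpose B ** P) *v v) = (norm p)\<^sup>2"
  proof -
    have "v \<bullet> ((P ** B ** transpose B ** P) *v v) = v \<bullet> (P *v (B *v p))"
      by (simp only: p_def matrix_vector_mul_assoc matrix_mul_assoc)
    also have "\<dots> = (B *v p) \<bullet> (P *v v)"
      by (rule symmetric_quadform_commute[OF assms])
    also have "\<dots> = (norm p)\<^sup>2"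
      by (simp only: inner_matrix_vector_mult_transpose p_def power2_norm_eq_inner)
    finally show ?thesis .
  qed
  moreover have "v \<bullet> ((transpose C ** C) *v v) = (norm (C *v v))\<^sup>2"
    by (simp only: matrix_vector_mul_assoc[symmetric] inner_matrix_vector_mult_transpose[symmetric]
        power2_norm_eq_inner)
  ultimately show ?thesis
    unfolding riccati_rhs_def p_def
    by (simp only: matrix_vector_mult_add_rdistrib matrix_vector_mult_diff_rdistrib inner_add_right
        inner_diff_right)
qed

lemma riccati_rhs_diff_quadform:
  assumes "transpose P = P" "transpose Q = Q"
  shows "v \<bullet> ((riccati_rhs A B C P - riccati_rhs A B C Q) *v v) =
    2 * (((A - (1/2) *\<^sub>R ((B ** transpose B) ** (P + Q))) *v v) \<bullet> ((P - Q) *v v))"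
proof -
  define p q where "p = transpose B *v (P *v v)" and "q = transpose B *v (Q *v v)"
  have "(((B ** transpose B) ** (P + Q)) *v v) \<bullet> ((P - Q) *v v) = (B *v (p + q)) \<bullet> ((P - Q) *v v)"
    unfolding p_def q_def
    by (simp only: matrix_vector_mul_assoc matrix_vector_mult_add_rdistrib matrix_vector_right_distrib
        matrix_mul_assoc matrix_add_ldistrib)
  also have "\<dots> = (p + q) \<bullet> (p - q)"
    unfolding p_def q_def
    by (simp only: inner_matrix_vector_mult_transpose matrix_vector_mult_diff_rdistrib
        matrix_vector_mult_diff_distrib)
  also have "\<dots> = (norm p)\<^sup>2 - (norm q)\<^sup>2"
    by (simp add: inner_add_left inner_diff_right inner_commute[of q p] power2_norm_eq_inner)
  finally have "(((B ** transpose B) ** (P + Q)) *v v) \<bullet> ((P - Q) *v v) = (norm p)\<^sup>2 - (norm q)\<^sup>2" .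
  moreover have "v \<bullet> ((riccati_rhs A B C P - riccati_rhs A B C Q) *v v)
      = 2 * ((A *v v) \<bullet> ((P - Q) *v v)) - (norm p)\<^sup>2 + (norm q)\<^sup>2"
    using riccati_rhs_quadform[OF assms(1), of v A B C] riccati_rhs_quadform[OF assms(2), of v A B C]
    unfolding p_def q_def
    by (simp add: matrix_vector_mult_diff_rdistrib inner_diff_right right_diff_distrib)
  ultimately show ?thesis
    by (simp add: matrix_vector_mult_diff_rdistrib inner_diff_left
        scaleR_matrix_vector_assoc[symmetric] field_simps)
qed

lemma riccati_solution_psd:
  fixes A :: "real^'n^'n" and B :: "real^'b^'n" and C :: "real^'n^'c" and X :: "real \<Rightarrow> real^'n^'n"
  assumes X0: "X 0 = 0"
    and der: "\<And>t. t \<ge> 0 \<Longrightarrow> (X has_vector_derivative riccati_rhs A B C (X t)) (at t within {0..})"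
    and T: "T \<ge> 0"
  shows "psd (X T)"
proof (rule psd_preserved[where G = "\<lambda>t. A - (1/2) *\<^sub>R ((B ** transpose B) ** X t)", OF der _ _ _ _ T])
  show sym: "transpose (X t) = X t" if "t \<ge> 0" for t
    using riccati_solution_symmetric[OF X0 der that] .
  have "continuous_on {0..} X"
    using der by (intro continuous_on_vector_derivative) auto
  then show "continuous_on {0..} (\<lambda>t. A - (1/2) *\<^sub>R ((B ** transpose B) ** X t))"
    by (intro continuous_intros)
  show "psd (X 0)"
    by (simp add: X0 psd_def)
  fix t :: real and v :: "real^'n"
  assume "t \<ge> 0"
  have "2 * (((A - (1/2) *\<^sub>R ((B ** transpose B) ** X t)) *v v) \<bullet> (X t *v v))
      = v \<bullet> (riccati_rhs A B C (X t) *v v) - v \<bullet> (riccati_rhs A B C 0 *v v)"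
    using riccati_rhs_diff_quadform[OF sym[OF \<open>t \<ge> 0\<close>], of 0 v A B C]
    by (simp add: matrix_vector_mult_diff_rdistrib inner_diff_right)
  also have "\<dots> \<le> v \<bullet> (riccati_rhs A B C (X t) *v v)"
    using riccati_rhs_quadform[of 0 v A B C] by simp
  finally show "2 * (((A - (1/2) *\<^sub>R ((B ** transpose B) ** X t)) *v v) \<bullet> (X t *v v))
      \<le> v \<bullet> (riccati_rhs A B C (X t) *v v)" .
qed

lemma riccati_solution_below_ARE_solution:
  fixes A :: "real^'n^'n" and B :: "real^'b^'n" and C :: "real^'n^'c" and X :: "real \<Rightarrow> real^'n^'n"
  assumes X0: "X 0 = 0"
    and der: "\<And>t. t \<ge> 0 \<Longrightarrow> (X has_vector_derivative riccati_rhs A B C (X t)) (at t within {0..})"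
    and Xinf_sym: "transpose Xinf = Xinf" and Xinf_psd: "psd Xinf"
    and Xinf_ARE: "riccati_rhs A B C Xinf = 0"
    and T: "T \<ge> 0"
  shows "psd (Xinf - X T)"
proof (rule psd_preserved[where M' = "\<lambda>t. - riccati_rhs A B C (X t)"
      and G = "\<lambda>t. A - (1/2) *\<^sub>R ((B ** transpose B) ** (Xinf + X t))", OF _ _ _ _ _ T])
  show "((\<lambda>t. Xinf - X t) has_vector_derivative - riccati_rhs A B C (X t)) (at t within {0..})"
    if "t \<ge> 0" for t
    using has_vector_derivative_diff[OF has_vector_derivative_const der[OF that]] by simp
  have sym: "transpose (X t) = X t" if "t \<ge> 0" for t
    using riccati_solution_symmetric[OF X0 der that] .
  then show "transpose (Xinf - X t) = Xinf - X t" if "t \<ge> 0" for t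
    using Xinf_sym that by (simp add: transpose_diff)
  have "continuous_on {0..} X"
    using der by (intro continuous_on_vector_derivative) auto
  then show "continuous_on {0..} (\<lambda>t. A - (1/2) *\<^sub>R ((B ** transpose B) ** (Xinf + X t)))"
    by (intro continuous_intros)
  show "psd (Xinf - X 0)"
    using Xinf_psd by (simp add: X0)
  fix t :: real and v :: "real^'n"
  assume "t \<ge> 0"
  show "2 * (((A - (1/2) *\<^sub>R ((B ** transpose B) ** (Xinf + X t))) *v v) \<bullet> ((Xinf - X t) *v v))
      \<le> v \<bullet> (- riccati_rhs A B C (X t) *v v)"
    using riccati_rhs_diff_quadform[OF Xinf_sym sym[OF \<open>t \<ge> 0\<close>], of v A B C] Xinf_ARE
    by simp
qed

theorem theorem5p2:
  fixes A :: "real^'n^'n" and B :: "real^'b^'n" and C :: "real^'n^'c"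
    and Xinf :: "real^'n^'n" and q :: "nat \<Rightarrow> real^'n" and lam :: "nat \<Rightarrow> real"
    and X :: "real \<Rightarrow> real^'n^'n"
  assumes stab: "stabilizable A B"
    and det: "detectable A C"
    and Xinf_sym: "transpose Xinf = Xinf"
    and Xinf_psd: "psd Xinf"
    and Xinf_ARE: "riccati_rhs A B C Xinf = 0"
    and q_orthonormal: "\<forall>i<CARD('n). \<forall>j<CARD('n). q i \<bullet> q j = (if i = j then 1 else 0)"
    and q_eigen: "\<forall>i<CARD('n). Xinf *v q i = lam i *\<^sub>R q i"
    and lam_sorted: "\<forall>i j. i \<le> j \<and> j < CARD('n) \<longrightarrow> lam j \<le> lam i"
    and X0: "X 0 = 0"
    and X_DRE: "\<forall>t\<ge>0. (X has_vector_derivative riccati_rhs A B C (X t)) (at t within {0..})"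
  shows "\<forall>t\<ge>0. \<forall>i<CARD('n). \<forall>j<CARD('n).
           \<bar>q i \<bullet> (X t *v q j)\<bar> \<le> sqrt (lam i * lam j)"
proof (intro allI impI)
  fix t :: real and i j :: nat
  assume t: "t \<ge> 0" and i: "i < CARD('n)" and j: "j < CARD('n)"
  have der: "\<And>s. s \<ge> 0 \<Longrightarrow> (X has_vector_derivative riccati_rhs A B C (X s)) (at s within {0..})"
    using X_DRE by blast
  show "\<bar>q i \<bullet> (X t *v q j)\<bar> \<le> sqrt (lam i * lam j)"
  proof (rule psd_sandwich_inner_bound[where Q = Xinf])
    show "transpose (X t) = X t"
      using riccati_solution_symmetric[OF X0 der t] .
    show "psd (X t)"
      using riccati_solution_psd[OF X0 der t] .
    show "psd (Xinf - X t)"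
      using riccati_solution_below_ARE_solution[OF X0 der Xinf_sym Xinf_psd Xinf_ARE t] .
  qed (use q_eigen q_orthonormal i j in auto)
qed

end
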